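(* Let $(\mathcal{S}^x,G)$ be a finite elation generalized quadrangle of order $(s,t)$ with $s>t$, and suppose $st$ is a power of the prime $p$. Let $a\in G\setminus\{\mathrm{id}\}$ be such that every point fixed by $a$ lies on some line $L_a$ through $x$, and suppose that $\alpha(a)$, where $\alpha(a)+1$ is the number of points of $L_a$ fixed by $a$, is a power of $p$. Let $f(a)$ be the number of lines not incident with $x$ fixed by $a$. Then: (i) $f(a)\neq 0$; (ii) if $f(a)$ is also a power of $p$, then $\alpha(a)/f(a)=(s/t)^{o(a)}$ for some even integer $o(a)$.
   Context: A finite generalized quadrangle (GQ) of order $(s,t)$: every line has $s+1$ points, every point is on $t+1$ lines, two points are on at most one common line, and for each point $p$ not on a line $L$ there is a unique point of $L$ collinear with $p$. An elation generalized quadrangle $(\mathcal{S}^x,G)$: $G\le\mathrm{Aut}(\mathcal{S})$ fixes every line through $x$ and acts sharply transitively on the points not collinear with $x$. *)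

theory Defs
  imports Complex_Main "HOL-Computational_Algebra.Primes"
begin

definition collinear :: "'p set \<Rightarrow> 'l set \<Rightarrow> ('p \<Rightarrow> 'l \<Rightarrow> bool) \<Rightarrow> 'p \<Rightarrow> 'p \<Rightarrow> bool" where
  "collinear P Ls I p q \<longleftrightarrow> (\<exists>l\<in>Ls. I p l \<and> I q l)"

definition finite_GQ :: "'p set \<Rightarrow> 'l set \<Rightarrow> ('p \<Rightarrow> 'l \<Rightarrow> bool) \<Rightarrow> nat \<Rightarrow> nat \<Rightarrow> bool" where
  "finite_GQ P Ls I s t \<longleftrightarrow>
     finite P \<and> finite Ls \<and>
     (\<forall>l\<in>Ls. card {p\<in>P. I p l} = s + 1) \<and>
     (\<forall>p\<in>P. card {l\<in>Ls. I p l} = t + 1) \<and>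
     (\<forall>p\<in>P. \<forall>q\<in>P. p \<noteq> q \<longrightarrow> card {l\<in>Ls. I p l \<and> I q l} \<le> 1) \<and>
     (\<forall>p\<in>P. \<forall>l\<in>Ls. \<not> I p l \<longrightarrow> (\<exists>!q. q \<in> P \<and> I q l \<and> collinear P Ls I p q))"

definition automorphism :: "'p set \<Rightarrow> 'l set \<Rightarrow> ('p \<Rightarrow> 'l \<Rightarrow> bool) \<Rightarrow> ('p \<Rightarrow> 'p) \<times> ('l \<Rightarrow> 'l) \<Rightarrow> bool" where
  "automorphism P Ls I a \<longleftrightarrow>
     bij_betw (fst a) P P \<and> bij_betw (snd a) Ls Ls \<and>
     (\<forall>p\<in>P. \<forall>l\<in>Ls. I p l \<longleftrightarrow> I (fst a p) (snd a l)) \<and>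
     (\<forall>p. p \<notin> P \<longrightarrow> fst a p = p) \<and> (\<forall>l. l \<notin> Ls \<longrightarrow> snd a l = l)"

definition aut_id :: "('p \<Rightarrow> 'p) \<times> ('l \<Rightarrow> 'l)" where
  "aut_id = (id, id)"

definition aut_comp :: "('p \<Rightarrow> 'p) \<times> ('l \<Rightarrow> 'l) \<Rightarrow> ('p \<Rightarrow> 'p) \<times> ('l \<Rightarrow> 'l) \<Rightarrow> ('p \<Rightarrow> 'p) \<times> ('l \<Rightarrow> 'l)" where
  "aut_comp a b = (fst a \<circ> fst b, snd a \<circ> snd b)"

definition aut_inv :: "('p \<Rightarrow> 'p) \<times> ('l \<Rightarrow> 'l) \<Rightarrow> ('p \<Rightarrow> 'p) \<times> ('l \<Rightarrow> 'l)" where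
  "aut_inv a = (inv (fst a), inv (snd a))"

definition aut_subgroup :: "'p set \<Rightarrow> 'l set \<Rightarrow> ('p \<Rightarrow> 'l \<Rightarrow> bool) \<Rightarrow> (('p \<Rightarrow> 'p) \<times> ('l \<Rightarrow> 'l)) set \<Rightarrow> bool" where
  "aut_subgroup P Ls I G \<longleftrightarrow>
     (\<forall>a\<in>G. automorphism P Ls I a) \<and> aut_id \<in> G \<and>
     (\<forall>a\<in>G. \<forall>b\<in>G. aut_comp a b \<in> G) \<and> (\<forall>a\<in>G. aut_inv a \<in> G)"

definition elation_GQ :: "'p set \<Rightarrow> 'l set \<Rightarrow> ('p \<Rightarrow> 'l \<Rightarrow> bool) \<Rightarrow> nat \<Rightarrow> nat \<Rightarrow> 'p \<Rightarrow>
    (('p \<Rightarrow> 'p) \<times> ('l \<Rightarrow> 'l)) set \<Rightarrow> bool" where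
  "elation_GQ P Ls I s t x G \<longleftrightarrow>
     finite_GQ P Ls I s t \<and> x \<in> P \<and> aut_subgroup P Ls I G \<and>
     (\<forall>a\<in>G. \<forall>l\<in>Ls. I x l \<longrightarrow> snd a l = l) \<and>
     (\<forall>y\<in>{q\<in>P. \<not> collinear P Ls I x q}. \<forall>z\<in>{q\<in>P. \<not> collinear P Ls I x q}.
        \<exists>!a. a \<in> G \<and> fst a y = z)"

end

(*
  Benson's congruence: for an automorphism of a generalized quadrangle of order (s, t), the sum over
  all points y of the number of lines through y and its image is congruent to 1 + st modulo s + t.
  The integer matrix C = (s + 1) B - J, with B that "common lines" matrix, satisfies
  C^2 = (s + 1)(s + t) C, so C / ((s + 1)(s + t)) is an idempotent commuting with the permutation
  matrix of the automorphism; the trace of their product is rational and a sum of roots of unity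
  and zeros, hence an integer.

  For the elation a, whose fixed points all lie on L_a, the sum equals
  t(alpha + 1) + 1 + (t + 1)s + s f: points collinear with x contribute t + 1 or 1, and a point y
  not collinear with x contributes 1 exactly when it lies on one of the f fixed lines not through x.
  Hence s + t divides t alpha + s f. Writing s = t p^d, this means p^d + 1 divides alpha - f. As
  p^d + 1 is prime to p, f = 0 is impossible, and if f is a power of p the exponents of alpha and f
  differ by a multiple of 2d, the order of p modulo p^d + 1.
*)

theory Submission
  imports Defs "Berlekamp_Zassenhaus.Factor_Bound" "Jordan_Normal_Form.Schur_Decomposition"
    "HOL-Combinatorics.Cycles"
begin

section \<open>Permutation matrices and traces\<close>

definition perm_mat :: "nat \<Rightarrow> (nat \<Rightarrow> nat) \<Rightarrow> 'a::semiring_1 mat" where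
  "perm_mat n f = mat n n (\<lambda>(i, j). if j = f i then 1 else 0)"

lemma perm_mat_carrier [simp]: "perm_mat n f \<in> carrier_mat n n"
  by (simp add: perm_mat_def)

lemma perm_mat_mult_left:
  assumes X: "X \<in> carrier_mat n m" and f: "\<forall>i<n. f i < n" and i: "i < n" and j: "j < m"
  shows "(perm_mat n f * X) $$ (i, j) = X $$ (f i, j)"
proof -
  have "(perm_mat n f * X) $$ (i, j) = (\<Sum>k\<in>{0..<n}. (if k = f i then 1 else 0) * X $$ (k, j))"
    using X i j by (simp add: perm_mat_def scalar_prod_def)
  also have "\<dots> = (\<Sum>k\<in>{0..<n}. if k = f i then X $$ (k, j) else 0)"
    by (rule sum.cong) auto
  also have "\<dots> = X $$ (f i, j)" using f i by (simp add: sum.delta')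
  finally show ?thesis .
qed

lemma perm_mat_mult_right:
  assumes \<sigma>: "\<sigma> permutes {..<n}" and X: "X \<in> carrier_mat m n" and i: "i < m" and j: "j < n"
  shows "(X * perm_mat n \<sigma>) $$ (i, j) = X $$ (i, inv_into UNIV \<sigma> j)"
proof -
  have "(X * perm_mat n \<sigma>) $$ (i, j) = (\<Sum>k\<in>{0..<n}. X $$ (i, k) * (if j = \<sigma> k then 1 else 0))"
    using X i j by (simp add: perm_mat_def scalar_prod_def)
  also have "\<dots> = (\<Sum>k\<in>{0..<n}. if k = inv_into UNIV \<sigma> j then X $$ (i, k) else 0)"
    by (rule sum.cong) (use \<sigma> in \<open>auto simp: permutes_inv_eq\<close>)
  also have "\<dots> = X $$ (i, inv_into UNIV \<sigma> j)"
    using permutes_in_image[OF permutes_inv[OF \<sigma>]] j by simp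
  finally show ?thesis .
qed

lemma perm_mat_mult:
  assumes f: "\<forall>i<n. f i < n" and g: "\<forall>i<n. g i < n"
  shows "perm_mat n f * perm_mat n g = (perm_mat n (g \<circ> f) :: 'a::semiring_1 mat)"
proof (rule eq_matI)
  fix i j assume "i < dim_row (perm_mat n (g \<circ> f) :: 'a mat)" "j < dim_col (perm_mat n (g \<circ> f) :: 'a mat)"
  then have i: "i < n" and j: "j < n" by (auto simp: perm_mat_def)
  show "(perm_mat n f * perm_mat n g) $$ (i, j) = (perm_mat n (g \<circ> f) :: 'a mat) $$ (i, j)"
    using perm_mat_mult_left[of "perm_mat n g" n n f i j] f g i j by (simp add: perm_mat_def)
qed (auto simp: perm_mat_def)

lemma perm_mat_pow:
  assumes f: "\<forall>i<n. f i < n"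
  shows "(perm_mat n f :: 'a::semiring_1 mat) ^\<^sub>m k = perm_mat n (f ^^ k)"
proof (induction k)
  case 0
  show ?case by (rule eq_matI) (auto simp: perm_mat_def)
next
  case (Suc k)
  have "\<forall>i<n. (f ^^ k) i < n" using f by (induction k) auto
  then show ?case using Suc perm_mat_mult[OF _ f, of "f ^^ k"] by (simp add: comp_def)
qed

definition mat_trace :: "'a::comm_ring_1 mat \<Rightarrow> 'a" where
  "mat_trace A = (\<Sum>i<dim_row A. A $$ (i, i))"

lemma mat_trace_mult_commute:
  assumes A: "A \<in> carrier_mat n n" and B: "B \<in> carrier_mat n n"
  shows "mat_trace (A * B) = mat_trace (B * A)"
proof -
  have "mat_trace (A * B) = (\<Sum>i<n. \<Sum>k<n. A $$ (i, k) * B $$ (k, i))"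
    using A B by (simp add: mat_trace_def scalar_prod_def atLeast0LessThan)
  also have "\<dots> = (\<Sum>k<n. \<Sum>i<n. B $$ (k, i) * A $$ (i, k))"
    by (subst sum.swap) (simp add: mult.commute)
  also have "\<dots> = mat_trace (B * A)"
    using A B by (simp add: mat_trace_def scalar_prod_def atLeast0LessThan)
  finally show ?thesis .
qed

lemma mat_trace_similar:
  assumes "similar_mat_wit A B P Q" "A \<in> carrier_mat n n"
  shows "mat_trace A = mat_trace B"
proof -
  from assms have c: "B \<in> carrier_mat n n" "P \<in> carrier_mat n n" "Q \<in> carrier_mat n n"
    and QP: "Q * P = 1\<^sub>m n" and AP: "A = P * B * Q"
    unfolding similar_mat_wit_def Let_def by auto
  have "mat_trace A = mat_trace (Q * (P * B))"
    unfolding AP by (rule mat_trace_mult_commute[of _ n]) (use c in auto)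
  also have "Q * (P * B) = (Q * P) * B" using c by (simp add: assoc_mult_mat[of _ n n _ n _ n])
  finally show ?thesis using QP c by simp
qed

lemma mat_trace_eq_sum_diag:
  assumes "B \<in> carrier_mat n n"
  shows "mat_trace B = sum_list (diag_mat B)"
  using assms by (simp add: mat_trace_def diag_mat_def sum_list_sum_nth atLeast0LessThan)

lemma mat_trace_eq_sum_eigenvalues:
  fixes A :: "complex mat"
  assumes A: "A \<in> carrier_mat n n" and cp: "char_poly A = (\<Prod>e\<leftarrow>es. [:- e, 1:])"
  shows "mat_trace A = sum_list es"
proof -
  obtain B P Q where "schur_decomposition A es = (B, P, Q)" by (cases "schur_decomposition A es") auto
  from schur_decomposition[OF A cp this]
  have sim: "similar_mat_wit A B P Q" and "diag_mat B = es" by auto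
  moreover have "B \<in> carrier_mat n n" using sim A unfolding similar_mat_wit_def Let_def by auto
  ultimately show ?thesis using mat_trace_similar[OF sim A] mat_trace_eq_sum_diag by metis
qed

lemma prod_linear_factors_monic:
  "degree (\<Prod>e\<leftarrow>es. [:- (e::'a::idom), 1:]) = length es \<and> coeff (\<Prod>e\<leftarrow>es. [:- e, 1:]) (length es) = 1"
proof (induction es)
  case (Cons e es)
  let ?Q = "\<Prod>e\<leftarrow>es. [:- e, 1:]"
  have "?Q \<noteq> 0" using Cons by auto
  then have "degree ([:-e, 1:] * ?Q) = Suc (length es)"
    using Cons by (subst degree_mult_eq) auto
  moreover have "lead_coeff ([:-e, 1:] * ?Q) = 1"
    using Cons by (simp only: lead_coeff_mult) simp
  ultimately show ?case by simp
qed simp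

lemma coeff_prod_linear_factors:
  "es \<noteq> [] \<Longrightarrow> coeff (\<Prod>e\<leftarrow>es. [:- (e::'a::idom), 1:]) (length es - 1) = - sum_list es"
proof (induction es)
  case (Cons e es)
  let ?Q = "\<Prod>e\<leftarrow>es. [:- e, 1:]"
  show ?case
  proof (cases "es = []")
    case False
    then obtain L where L: "length es = Suc L" by (cases es) auto
    have "[:-e, 1:] * ?Q = smult (-e) ?Q + pCons 0 ?Q" by (simp add: mult_poly_add_left)
    then have "coeff ([:-e, 1:] * ?Q) (length es) = - e * coeff ?Q (length es) + coeff ?Q L"
      using L by simp
    then show ?thesis
      using Cons.IH[OF False] L prod_linear_factors_monic[of es] by simp
  qed simp
qed simp

lemma mat_trace_eq_coeff_char_poly:
  fixes A :: "complex mat"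
  assumes A: "A \<in> carrier_mat n n" and "n > 0"
  shows "mat_trace A = - coeff (char_poly A) (n - 1)"
proof -
  obtain es where es: "char_poly A = (\<Prod>e\<leftarrow>es. [:- e, 1:])" "length es = n"
    using char_poly_factorized[OF A] by blast
  then have "es \<noteq> []" using \<open>n > 0\<close> by auto
  then show ?thesis
    using mat_trace_eq_sum_eigenvalues[OF A es(1)] coeff_prod_linear_factors[of es] es by simp
qed

lemma mat_trace_map_of_rat:
  assumes "M \<in> carrier_mat n n"
  shows "mat_trace (map_mat (of_rat :: rat \<Rightarrow> 'a::field_char_0) M) = of_rat (mat_trace M)"
  unfolding mat_trace_def of_rat_sum by (rule sum.cong) (use assms in auto)

lemma smult_vec_cancel:
  assumes "v \<in> carrier_vec n" "v \<noteq> 0\<^sub>v n" "a \<cdot>\<^sub>v v = b \<cdot>\<^sub>v (v :: 'a::idom vec)"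
  shows "a = b"
proof -
  obtain i where i: "i < n" "v $ i \<noteq> 0"
    using assms(1,2) by (metis eq_vecI carrier_vecD index_zero_vec)
  have "(a \<cdot>\<^sub>v v) $ i = (b \<cdot>\<^sub>v v) $ i" using assms(3) by simp
  then show ?thesis using i assms(1) by simp
qed

lemma prod_linear_factors_dvd_power:
  assumes "\<forall>e\<in>set es. [:- e, 1:] dvd (q :: 'a::idom poly)"
  shows "(\<Prod>e\<leftarrow>es. [:- e, 1:]) dvd q ^ length es"
  using assms
proof (induction es)
  case (Cons e es)
  show ?case unfolding list.map prod_list.Cons length_Cons power_Suc
    by (rule mult_dvd_mono) (use Cons in auto)
qed simp

text \<open>Every eigenvalue of a matrix with \<open>A\<^sup>m\<^sup>+\<^sup>1 = A\<close> is a root of \<open>X\<^sup>m\<^sup>+\<^sup>1 - X\<close>.\<close>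
lemma char_poly_dvd_power_of_periodic:
  fixes A :: "complex mat"
  assumes A: "A \<in> carrier_mat n n" and per: "A ^\<^sub>m Suc m = A"
  shows "char_poly A dvd (monom 1 (Suc m) - monom 1 1) ^ n"
proof -
  obtain es where es: "char_poly A = (\<Prod>e\<leftarrow>es. [:- e, 1:])" "length es = n"
    using char_poly_factorized[OF A] by blast
  have "[:- e, 1:] dvd monom 1 (Suc m) - monom 1 1" if e: "e \<in> set es" for e
  proof -
    have "poly (char_poly A) e = 0" unfolding es(1) using e
      by (simp add: poly_prod_list prod_list_zero_iff)
    then obtain v where v: "eigenvector A v e"
      using eigenvalue_root_char_poly[OF A] unfolding eigenvalue_def by blast
    have "e ^ Suc m \<cdot>\<^sub>v v = e \<cdot>\<^sub>v v"
      using eigenvector_pow[OF A v, of "Suc m"] v per A unfolding eigenvector_def by simp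
    then have "e ^ Suc m = e" using v A unfolding eigenvector_def
      by (intro smult_vec_cancel[of v n]) auto
    then have "poly (monom 1 (Suc m) - monom 1 1) e = 0" by (simp add: poly_monom)
    then show ?thesis by (simp only: poly_eq_0_iff_dvd)
  qed
  then show ?thesis using prod_linear_factors_dvd_power[of es] es by simp
qed

text \<open>An instance of Gauss's lemma.\<close>
lemma monic_factor_of_int_poly:
  fixes q :: "rat poly" and g :: "int poly"
  assumes q: "lead_coeff q = 1" and g: "lead_coeff g = 1" and dvd: "q dvd map_poly of_int g"
  shows "\<exists>r. q = map_poly of_int r"
proof -
  obtain h where h: "map_poly of_int g = q * h" using dvd by (elim dvdE)
  have g0: "g \<noteq> 0" using g by auto
  have "content g dvd 1" using content_dvd_coeff[of g "degree g"] g by simp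
  then have cont: "content g = 1" using content_ge_0_int[of g] by simp
  obtain c r where cr: "rat_to_normalized_int_poly q = (c, r)" by force
  obtain d k where dk: "rat_to_normalized_int_poly h = (d, k)" by force
  have "g = r * k" by (rule rat_to_int_factor_content_1[OF cont h cr dk g0])
  then have "lead_coeff r * lead_coeff k = 1" using g by (simp add: lead_coeff_mult)
  then have "lead_coeff r = 1 \<or> lead_coeff r = -1" by (simp add: zmult_eq_1_iff) blast
  moreover have "lead_coeff q = c * of_int (lead_coeff r)"
    using rat_to_normalized_int_poly[OF cr] by (metis coeff_smult of_int_hom.coeff_map_poly_hom)
  ultimately have "c = 1" using q rat_to_normalized_int_poly(2)[OF cr] by auto
  then show ?thesis using rat_to_normalized_int_poly(1)[OF cr] by auto
qed

lemma char_poly_integral_of_periodic: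
  fixes M :: "rat mat"
  assumes M: "M \<in> carrier_mat n n" and per: "M ^\<^sub>m Suc m = M" and "m > 0"
  shows "\<exists>r. char_poly M = map_poly of_int r"
proof -
  define g :: "int poly" where "g = (monom 1 (Suc m) - monom 1 1) ^ n"
  interpret of_rat_poly: map_poly_comm_ring_hom "of_rat :: rat \<Rightarrow> complex" ..
  have "map_mat of_rat M ^\<^sub>m Suc m = (map_mat of_rat M :: complex mat)"
    using of_rat_hom.mat_hom_pow[OF M, of "Suc m", symmetric] per by (simp only:)
  then have "char_poly (map_mat of_rat M) dvd (monom 1 (Suc m) - monom 1 1 :: complex poly) ^ n"
    using char_poly_dvd_power_of_periodic M by simp
  moreover have "map_poly of_rat ((monom 1 (Suc m) - monom 1 1 :: rat poly) ^ n)
      = (monom 1 (Suc m) - monom 1 1 :: complex poly) ^ n"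
    by (simp add: of_rat_poly.hom_power of_rat_poly.hom_minus of_rat_hom.map_poly_hom_monom)
  ultimately have "map_poly (of_rat :: rat \<Rightarrow> complex) (char_poly M)
      dvd map_poly of_rat ((monom 1 (Suc m) - monom 1 1) ^ n)"
    by (simp add: of_rat_hom.char_poly_hom[OF M])
  then have "char_poly M dvd (monom 1 (Suc m) - monom 1 1) ^ n"
    by (rule of_rat_hom.dvd_map_poly_hom_imp_dvd)
  also have "(monom 1 (Suc m) - monom 1 1 :: rat poly) ^ n = map_poly of_int g"
    by (simp add: g_def of_int_poly_hom.hom_power of_int_poly_hom.hom_minus of_int_hom.map_poly_hom_monom)
  finally have dvd: "char_poly M dvd map_poly of_int g" .
  have "lead_coeff (monom 1 (Suc m) - monom 1 1 :: int poly) = 1"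
  proof -
    have "coeff (monom 1 (Suc m) - monom 1 1 :: int poly) (Suc m) = 1"
      using \<open>m > 0\<close> by (simp add: coeff_monom)
    moreover have "degree (monom 1 (Suc m) - monom 1 1 :: int poly) \<le> Suc m"
      by (rule degree_diff_le) (auto intro: order.trans[OF degree_monom_le])
    ultimately show ?thesis by (metis le_antisym le_degree one_neq_zero)
  qed
  then have "lead_coeff g = 1" unfolding g_def lead_coeff_power by simp
  moreover have "lead_coeff (char_poly M) = 1" using degree_monic_char_poly[OF M] by simp
  ultimately show ?thesis using monic_factor_of_int_poly dvd by blast
qed

lemma mat_trace_integral_of_periodic:
  fixes M :: "rat mat"
  assumes M: "M \<in> carrier_mat n n" and per: "M ^\<^sub>m Suc m = M" and "m > 0"
  shows "\<exists>z. mat_trace M = of_int z"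
proof (cases "n = 0")
  case True
  then show ?thesis using M by (intro exI[of _ 0]) (simp add: mat_trace_def)
next
  case False
  obtain r where r: "char_poly M = map_poly of_int r"
    using char_poly_integral_of_periodic[OF M per \<open>m > 0\<close>] by blast
  have "(of_rat (mat_trace M) :: complex) = mat_trace (map_mat of_rat M)"
    by (rule mat_trace_map_of_rat[OF M, symmetric])
  also have "\<dots> = - coeff (char_poly (map_mat of_rat M)) (n - 1)"
    using mat_trace_eq_coeff_char_poly[of _ n] M False by simp
  also have "\<dots> = of_rat (of_int (- coeff r (n - 1)))"
    by (simp add: of_rat_hom.char_poly_hom[OF M] r of_rat_hom.coeff_map_poly_hom
        of_int_hom.coeff_map_poly_hom of_rat_minus)
  finally show ?thesis by (metis of_rat_eq_iff)
qed

text \<open>If \<open>E\<close> commutes with \<open>P\<close>, then \<open>(P E)\<^sup>k\<^sup>+\<^sup>1 = P\<^sup>k\<^sup>+\<^sup>1 E\<close>, which returns to \<open>P E\<close> when \<open>P\<^sup>k = 1\<close>.\<close>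
lemma mat_trace_perm_idempotent_integral:
  fixes E :: "rat mat"
  assumes E: "E \<in> carrier_mat n n" and idem: "E * E = E" and \<sigma>: "\<sigma> permutes {..<n}"
    and comm: "perm_mat n \<sigma> * E = E * perm_mat n \<sigma>"
  shows "\<exists>z. mat_trace (perm_mat n \<sigma> * E) = of_int z"
proof -
  define Q :: "rat mat" where "Q = perm_mat n \<sigma>"
  have Q: "Q \<in> carrier_mat n n" by (simp add: Q_def)
  have pow: "(Q * E) ^\<^sub>m Suc k = Q ^\<^sub>m Suc k * E" for k
  proof (induction k)
    case (Suc k)
    have Qk: "Q ^\<^sub>m Suc k \<in> carrier_mat n n" using Q by (rule pow_carrier_mat)
    have "(Q * E) ^\<^sub>m Suc (Suc k) = Q ^\<^sub>m Suc k * (E * Q) * E"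
      using Suc Qk E Q by (simp add: assoc_mult_mat[of _ n n _ n _ n])
    also have "\<dots> = Q ^\<^sub>m Suc k * (Q * E) * E" using comm by (simp add: Q_def)
    also have "\<dots> = (Q ^\<^sub>m Suc k * Q) * (E * E)"
      using Qk E Q by (simp add: assoc_mult_mat[of _ n n _ n _ n])
    finally show ?case using idem by simp
  qed (use Q in simp)
  obtain m where m: "\<sigma> ^^ m = id" "m > 0"
    using permutation_is_nilpotent[of \<sigma>] \<sigma> unfolding permutation_permutes by blast
  have "Q ^\<^sub>m m = perm_mat n (\<sigma> ^^ m)"
    unfolding Q_def by (rule perm_mat_pow) (use permutes_in_image[OF \<sigma>] in auto)
  also have "\<dots> = 1\<^sub>m n" unfolding m(1) by (rule eq_matI) (auto simp: perm_mat_def)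
  finally have "(Q * E) ^\<^sub>m Suc m = Q * E" using pow[of m] Q by simp
  then show ?thesis
    using mat_trace_integral_of_periodic[OF mult_carrier_mat[OF Q E] _ m(2)] by (simp add: Q_def)
qed

text \<open>\<open>c / D\<close> is an idempotent rational matrix commuting with the permutation matrix of \<open>\<sigma>\<close>,
  so the trace of their product is an integer.\<close>
lemma dvd_sum_invariant_diagonal_nat:
  fixes c :: "nat \<Rightarrow> nat \<Rightarrow> int"
  assumes \<sigma>: "\<sigma> permutes {..<n}"
    and sq: "\<And>i j. i < n \<Longrightarrow> j < n \<Longrightarrow> (\<Sum>k<n. c i k * c k j) = D * c i j" and D: "D \<noteq> 0"
    and inv: "\<And>i j. i < n \<Longrightarrow> j < n \<Longrightarrow> c (\<sigma> i) (\<sigma> j) = c i j"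
  shows "D dvd (\<Sum>i<n. c (\<sigma> i) i)"
proof -
  define E :: "rat mat" where "E = mat n n (\<lambda>(i, j). of_int (c i j) / of_int D)"
  have E: "E \<in> carrier_mat n n" by (simp add: E_def)
  have \<sigma>n: "\<forall>i<n. \<sigma> i < n" using permutes_in_image[OF \<sigma>] by auto
  have "E * E = E"
  proof (rule eq_matI)
    fix i j assume "i < dim_row E" "j < dim_col E"
    then have i: "i < n" and j: "j < n" by (auto simp: E_def)
    have "(E * E) $$ (i, j) = (\<Sum>k\<in>{0..<n}. (of_int (c i k) / of_int D) * (of_int (c k j) / of_int D))"
      using i j by (simp add: E_def scalar_prod_def)
    also have "\<dots> = of_int (\<Sum>k<n. c i k * c k j) / (of_int D * of_int D)"
      by (simp add: sum_divide_distrib atLeast0LessThan)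
    finally show "(E * E) $$ (i, j) = E $$ (i, j)" using i j D by (simp add: sq E_def)
  qed (auto simp: E_def)
  moreover have "perm_mat n \<sigma> * E = E * perm_mat n \<sigma>"
  proof (rule eq_matI)
    fix i j assume "i < dim_row (E * perm_mat n \<sigma>)" "j < dim_col (E * perm_mat n \<sigma>)"
    then have i: "i < n" and j: "j < n" using E by (auto simp: perm_mat_def)
    have "inv_into UNIV \<sigma> j < n" and "\<sigma> (inv_into UNIV \<sigma> j) = j"
      using permutes_in_image[OF permutes_inv[OF \<sigma>]] \<sigma> j by (auto simp: permutes_inverses(1))
    then show "(perm_mat n \<sigma> * E) $$ (i, j) = (E * perm_mat n \<sigma>) $$ (i, j)"
      using perm_mat_mult_left[OF E \<sigma>n i j] perm_mat_mult_right[OF \<sigma> E i j]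
        inv[of i "inv_into UNIV \<sigma> j"] i j \<sigma>n by (simp add: E_def)
  qed (use E in \<open>auto simp: perm_mat_def\<close>)
  ultimately obtain z where z: "mat_trace (perm_mat n \<sigma> * E) = of_int z"
    using mat_trace_perm_idempotent_integral[OF E _ \<sigma>] by blast
  have "mat_trace (perm_mat n \<sigma> * E) = (\<Sum>i<n. E $$ (\<sigma> i, i))"
    unfolding mat_trace_def using perm_mat_mult_left[OF E \<sigma>n]
    by (intro sum.cong) (auto simp: perm_mat_def)
  also have "\<dots> = of_int (\<Sum>i<n. c (\<sigma> i) i) / of_int D"
    using \<sigma>n by (simp add: E_def sum_divide_distrib)
  finally have "of_int (\<Sum>i<n. c (\<sigma> i) i) = (of_int (D * z) :: rat)" using z D by (simp add: field_simps)
  then have "(\<Sum>i<n. c (\<sigma> i) i) = D * z" by (simp only: of_int_eq_iff)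
  then show ?thesis by simp
qed

lemma dvd_sum_invariant_diagonal:
  fixes c :: "'a \<Rightarrow> 'a \<Rightarrow> int"
  assumes A: "finite A" and g: "bij_betw g A A"
    and sq: "\<And>i j. i \<in> A \<Longrightarrow> j \<in> A \<Longrightarrow> (\<Sum>k\<in>A. c i k * c k j) = D * c i j" and D: "D \<noteq> 0"
    and inv: "\<And>i j. i \<in> A \<Longrightarrow> j \<in> A \<Longrightarrow> c (g i) (g j) = c i j"
  shows "D dvd (\<Sum>i\<in>A. c (g i) i)"
proof -
  define n where "n = card A"
  obtain h where h: "bij_betw h {..<n} A"
    using ex_bij_betw_nat_finite[OF A] unfolding n_def atLeast0LessThan by blast
  define h' where "h' = the_inv_into {..<n} h"
  have h': "bij_betw h' A {..<n}" unfolding h'_def by (rule bij_betw_the_inv_into[OF h])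
  define \<sigma> where "\<sigma> i = (if i < n then h' (g (h i)) else i)" for i
  have "bij_betw \<sigma> {..<n} {..<n}"
    using bij_betw_trans[OF bij_betw_trans[OF h g] h'] by (rule bij_betw_cong[THEN iffD1, rotated]) (simp add: \<sigma>_def)
  then have \<sigma>: "\<sigma> permutes {..<n}" by (rule bij_imp_permutes) (simp add: \<sigma>_def)
  have hA: "h i \<in> A" if "i < n" for i using h that bij_betwE by blast
  have h\<sigma>: "h (\<sigma> i) = g (h i)" if "i < n" for i
    using that hA[OF that] bij_betwE[OF g] unfolding \<sigma>_def h'_def by (simp add: f_the_inv_into_f_bij_betw[OF h])
  have reindex: "(\<Sum>k<n. f (h k)) = (\<Sum>k\<in>A. f k)" for f :: "'a \<Rightarrow> int"
    by (rule sum.reindex_bij_betw[OF h])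
  have "D dvd (\<Sum>i<n. c (h (\<sigma> i)) (h i))"
  proof (rule dvd_sum_invariant_diagonal_nat[OF \<sigma>])
    fix i j assume "i < n" "j < n"
    then show "(\<Sum>k<n. c (h i) (h k) * c (h k) (h j)) = D * c (h i) (h j)"
      using reindex[of "\<lambda>k. c (h i) k * c k (h j)"] sq hA by simp
  next
    fix i j assume "i < n" "j < n"
    then show "c (h (\<sigma> i)) (h (\<sigma> j)) = c (h i) (h j)" using h\<sigma> inv hA by simp
  qed (rule D)
  then show ?thesis using reindex[of "\<lambda>k. c (g k) k"] h\<sigma> by simp
qed

section \<open>Counting in a generalized quadrangle\<close>

definition common_lines :: "'l set \<Rightarrow> ('p \<Rightarrow> 'l \<Rightarrow> bool) \<Rightarrow> 'p \<Rightarrow> 'p \<Rightarrow> nat" where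
  "common_lines Ls I y z = card {l\<in>Ls. I y l \<and> I z l}"

locale finite_gq =
  fixes P :: "'p set" and Ls :: "'l set" and I :: "'p \<Rightarrow> 'l \<Rightarrow> bool" and s t :: nat
  assumes finite_GQ: "finite_GQ P Ls I s t"
begin

abbreviation col :: "'p \<Rightarrow> 'p \<Rightarrow> bool" where
  "col \<equiv> collinear P Ls I"

abbreviation cl :: "'p \<Rightarrow> 'p \<Rightarrow> nat" where
  "cl \<equiv> common_lines Ls I"

lemma finite_points: "finite P"
  and finite_lines: "finite Ls"
  and card_points_on_line: "l \<in> Ls \<Longrightarrow> card {p\<in>P. I p l} = s + 1"
  and card_lines_through: "p \<in> P \<Longrightarrow> card {l\<in>Ls. I p l} = t + 1"
  and common_lines_le_one: "p \<in> P \<Longrightarrow> q \<in> P \<Longrightarrow> p \<noteq> q \<Longrightarrow> cl p q \<le> 1"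
  and unique_collinear_point_on_line:
    "p \<in> P \<Longrightarrow> l \<in> Ls \<Longrightarrow> \<not> I p l \<Longrightarrow> \<exists>!q. q \<in> P \<and> I q l \<and> col p q"
  using finite_GQ unfolding finite_GQ_def common_lines_def by auto

lemma unique_line:
  assumes "p \<in> P" "q \<in> P" "p \<noteq> q" "l \<in> Ls" "m \<in> Ls" "I p l" "I q l" "I p m" "I q m"
  shows "l = m"
proof (rule ccontr)
  assume "l \<noteq> m"
  then have "card {l, m} \<le> card {l\<in>Ls. I p l \<and> I q l}"
    using assms finite_lines by (intro card_mono) auto
  then show False using common_lines_le_one[OF assms(1-3)] \<open>l \<noteq> m\<close>
    by (simp add: common_lines_def)
qed

lemma collinear_commute: "col p q \<longleftrightarrow> col q p"
  unfolding collinear_def by auto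

lemma common_lines_commute: "cl y z = cl z y"
  unfolding common_lines_def by (metis (lifting) conj_commute)

lemma common_lines_self: "y \<in> P \<Longrightarrow> cl y y = t + 1"
  using card_lines_through by (simp add: common_lines_def)

lemma common_lines_collinear:
  assumes "y \<in> P" "z \<in> P" "y \<noteq> z" "col y z"
  shows "cl y z = 1"
proof -
  obtain l where l: "l \<in> Ls" "I y l" "I z l" using assms(4) unfolding collinear_def by blast
  then have "{l\<in>Ls. I y l \<and> I z l} = {l}" using unique_line[OF assms(1-3)] by auto
  then show ?thesis by (simp add: common_lines_def)
qed

lemma common_lines_not_collinear: "\<not> col y z \<Longrightarrow> cl y z = 0"
  unfolding common_lines_def collinear_def by (auto simp: card_eq_0_iff)

lemma sum_common_lines_weighted:
  fixes f :: "'p \<Rightarrow> int"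
  shows "(\<Sum>k\<in>P. int (cl y k) * f k) = (\<Sum>l\<in>{l\<in>Ls. I y l}. \<Sum>k\<in>{p\<in>P. I p l}. f k)"
proof -
  have "(\<Sum>k\<in>P. int (cl y k) * f k) = (\<Sum>k\<in>P. \<Sum>l\<in>{l\<in>Ls. I y l}. if I k l then f k else 0)"
  proof (rule sum.cong[OF refl])
    fix k
    have "(\<Sum>l\<in>{l\<in>Ls. I y l}. if I k l then f k else 0) = (\<Sum>l\<in>{l\<in>{l\<in>Ls. I y l}. I k l}. f k)"
      by (rule sum.inter_filter[symmetric]) (simp add: finite_lines)
    also have "{l\<in>{l\<in>Ls. I y l}. I k l} = {l\<in>Ls. I y l \<and> I k l}" by auto
    finally show "int (cl y k) * f k = (\<Sum>l\<in>{l\<in>Ls. I y l}. if I k l then f k else 0)"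
      by (simp add: common_lines_def)
  qed
  also have "\<dots> = (\<Sum>l\<in>{l\<in>Ls. I y l}. \<Sum>k\<in>P. if I k l then f k else 0)"
    by (rule sum.swap)
  also have "\<dots> = (\<Sum>l\<in>{l\<in>Ls. I y l}. \<Sum>k\<in>{p\<in>P. I p l}. f k)"
    using finite_points by (simp add: sum.inter_filter)
  finally show ?thesis .
qed

lemma sum_common_lines_on_line:
  assumes z: "z \<in> P" and l: "l \<in> Ls"
  shows "(\<Sum>k\<in>{p\<in>P. I p l}. int (cl k z)) = (if I z l then int s + int t + 1 else 1)"
proof (cases "I z l")
  case True
  have fin: "finite {p\<in>P. I p l}" using finite_points by simp
  have "cl k z = 1" if "k \<in> {p\<in>P. I p l} - {z}" for k
    using that l True z by (intro common_lines_collinear) (auto simp: collinear_def)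
  then have "(\<Sum>k\<in>{p\<in>P. I p l} - {z}. int (cl k z)) = int s"
    using fin z True card_points_on_line[OF l] by simp
  moreover have "(\<Sum>k\<in>{p\<in>P. I p l}. int (cl k z))
      = int (cl z z) + (\<Sum>k\<in>{p\<in>P. I p l} - {z}. int (cl k z))"
    using fin z True by (simp add: sum.remove)
  ultimately show ?thesis using True common_lines_self[OF z] by simp
next
  case False
  obtain q where q: "q \<in> P" "I q l" "col z q"
    and uq: "\<And>q'. q' \<in> P \<Longrightarrow> I q' l \<Longrightarrow> col z q' \<Longrightarrow> q' = q"
    using unique_collinear_point_on_line[OF z l False] by blast
  have "cl k z = (if k = q then 1 else 0)" if k: "k \<in> {p\<in>P. I p l}" for k
  proof (cases "k = q")
    case True
    then show ?thesis using common_lines_collinear[of k z] k z q(3) False collinear_commute by auto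
  next
    case False
    then show ?thesis using uq[of k] k collinear_commute common_lines_not_collinear by auto
  qed
  then have "(\<Sum>k\<in>{p\<in>P. I p l}. int (cl k z)) = (\<Sum>k\<in>{p\<in>P. I p l}. if k = q then 1 else 0)"
    by (intro sum.cong) auto
  then show ?thesis using finite_points q False by simp
qed

lemma sum_common_lines_product:
  assumes y: "y \<in> P" and z: "z \<in> P"
  shows "(\<Sum>k\<in>P. int (cl y k) * int (cl k z)) = (int s + int t) * int (cl y z) + int t + 1"
proof -
  have "(\<Sum>k\<in>P. int (cl y k) * int (cl k z))
      = (\<Sum>l\<in>{l\<in>Ls. I y l}. 1 + (int s + int t) * (if I z l then 1 else 0))"
    unfolding sum_common_lines_weighted using sum_common_lines_on_line[OF z] by (intro sum.cong) auto
  also have "\<dots> = int (card {l\<in>Ls. I y l}) + (int s + int t) * (\<Sum>l\<in>{l\<in>Ls. I y l}. if I z l then 1 else 0)"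
    by (simp add: sum.distrib sum_distrib_left)
  also have "(\<Sum>l\<in>{l\<in>Ls. I y l}. if I z l then 1 else 0) = (\<Sum>l\<in>{l\<in>{l\<in>Ls. I y l}. I z l}. 1::int)"
    by (rule sum.inter_filter[symmetric]) (simp add: finite_lines)
  also have "{l\<in>{l\<in>Ls. I y l}. I z l} = {l\<in>Ls. I y l \<and> I z l}" by auto
  finally show ?thesis using card_lines_through[OF y] by (simp add: common_lines_def)
qed

lemma sum_common_lines:
  assumes y: "y \<in> P"
  shows "(\<Sum>k\<in>P. int (cl y k)) = (int s + 1) * (int t + 1)"
proof -
  have "(\<Sum>k\<in>P. int (cl y k)) = (\<Sum>l\<in>{l\<in>Ls. I y l}. \<Sum>k\<in>{p\<in>P. I p l}. 1)"
    using sum_common_lines_weighted[of y "\<lambda>_. 1"] by simp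
  also have "\<dots> = (\<Sum>l\<in>{l\<in>Ls. I y l}. int s + 1)"
    using card_points_on_line by (intro sum.cong) auto
  finally show ?thesis using card_lines_through[OF y] by simp
qed

text \<open>Double counting \<open>\<Sum>\<^sub>z \<Sum>\<^sub>k cl y k * cl k z\<close> in the two possible orders.\<close>
lemma card_points:
  assumes y: "y \<in> P"
  shows "card P = (s + 1) * (s * t + 1)"
proof -
  let ?b = "\<lambda>u v. int (cl u v)"
  have "(\<Sum>z\<in>P. \<Sum>k\<in>P. ?b y k * ?b k z) = (\<Sum>k\<in>P. ?b y k * (\<Sum>z\<in>P. ?b k z))"
    by (subst sum.swap) (simp add: sum_distrib_left)
  also have "\<dots> = (\<Sum>k\<in>P. ?b y k * ((int s + 1) * (int t + 1)))"
    using sum_common_lines by (intro sum.cong) auto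
  also have "\<dots> = ((int s + 1) * (int t + 1)) * ((int s + 1) * (int t + 1))"
    using sum_common_lines[OF y] by (simp add: sum_distrib_right[symmetric])
  finally have A: "(\<Sum>z\<in>P. \<Sum>k\<in>P. ?b y k * ?b k z) = ((int s + 1) * (int t + 1)) * ((int s + 1) * (int t + 1))" .
  have "(\<Sum>z\<in>P. \<Sum>k\<in>P. ?b y k * ?b k z) = (\<Sum>z\<in>P. (int s + int t) * ?b y z + (int t + 1))"
    using sum_common_lines_product[OF y] by (intro sum.cong) (auto simp: add.assoc)
  also have "\<dots> = (int s + int t) * ((int s + 1) * (int t + 1)) + (int t + 1) * int (card P)"
    using sum_common_lines[OF y] by (simp add: sum.distrib sum_distrib_left[symmetric] mult.commute)
  finally have "(int t + 1) * int (card P) = (int t + 1) * int ((s + 1) * (s * t + 1))"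
    using A by (simp add: algebra_simps)
  then show ?thesis by (simp only: mult_cancel_left of_nat_eq_iff) simp
qed

lemma common_lines_automorphism:
  assumes aut: "automorphism P Ls I a" and y: "y \<in> P" and z: "z \<in> P"
  shows "cl (fst a y) (fst a z) = cl y z"
proof -
  have bij: "bij_betw (snd a) Ls Ls" and inc: "\<forall>p\<in>P. \<forall>l\<in>Ls. I p l \<longleftrightarrow> I (fst a p) (snd a l)"
    using aut unfolding automorphism_def by auto
  have "{l\<in>Ls. I (fst a y) l \<and> I (fst a z) l} = snd a ` {l\<in>Ls. I y l \<and> I z l}"
  proof (intro equalityI subsetI)
    fix l assume l: "l \<in> {l\<in>Ls. I (fst a y) l \<and> I (fst a z) l}"
    then obtain l' where "l' \<in> Ls" "l = snd a l'"
      using bij_betw_imp_surj_on[OF bij] by blast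
    then show "l \<in> snd a ` {l\<in>Ls. I y l \<and> I z l}" using l inc y z by auto
  qed (use inc y z bij_betwE[OF bij] in auto)
  moreover have "inj_on (snd a) {l\<in>Ls. I y l \<and> I z l}"
    using bij unfolding bij_betw_def by (auto intro: inj_on_subset)
  ultimately show ?thesis unfolding common_lines_def by (simp add: card_image)
qed

text \<open>The integer matrix \<open>C = (s + 1) B - J\<close>, with \<open>B\<close> the matrix of the
  numbers \<open>cl\<close> of common lines, satisfies \<open>C\<^sup>2 = (s + 1) (s + t) C\<close>.\<close>
theorem benson_congruence:
  assumes aut: "automorphism P Ls I a" and y0: "y0 \<in> P" and "s + t > 0"
  shows "int s + int t dvd int (\<Sum>y\<in>P. cl y (fst a y)) - (int s * int t + 1)"
proof -
  define c where "c y z = (int s + 1) * int (cl y z) - 1" for y z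
  define D where "D = (int s + 1) * (int s + int t)"
  have cP: "int (card P) = (int s + 1) * (int s * int t + 1)"
    unfolding card_points[OF y0] by (simp add: algebra_simps)
  have "(\<Sum>k\<in>P. c y k * c k z) = D * c y z" if y: "y \<in> P" and z: "z \<in> P" for y z
  proof -
    have "(\<Sum>k\<in>P. c y k * c k z) = (\<Sum>k\<in>P. (int s + 1)^2 * (int (cl y k) * int (cl k z))
        - (int s + 1) * int (cl y k) - (int s + 1) * int (cl z k) + 1)"
      unfolding c_def by (intro sum.cong) (simp_all add: algebra_simps power2_eq_square common_lines_commute)
    also have "\<dots> = (int s + 1)^2 * (\<Sum>k\<in>P. int (cl y k) * int (cl k z))
        - (int s + 1) * (\<Sum>k\<in>P. int (cl y k)) - (int s + 1) * (\<Sum>k\<in>P. int (cl z k)) + int (card P)"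
      by (simp add: sum.distrib sum_subtractf sum_distrib_left)
    also have "\<dots> = D * c y z"
      unfolding sum_common_lines_product[OF y z] sum_common_lines[OF y] sum_common_lines[OF z] cP D_def c_def
      by (simp add: algebra_simps power2_eq_square)
    finally show ?thesis .
  qed
  moreover have "D \<noteq> 0" unfolding D_def using \<open>s + t > 0\<close> by (simp add: add_nonneg_eq_0_iff)
  moreover have "c (fst a y) (fst a z) = c y z" if "y \<in> P" "z \<in> P" for y z
    using common_lines_automorphism[OF aut that] by (simp add: c_def)
  moreover have "bij_betw (fst a) P P" using aut by (simp add: automorphism_def)
  ultimately have "D dvd (\<Sum>y\<in>P. c (fst a y) y)"
    using dvd_sum_invariant_diagonal[OF finite_points] by blast
  also have "(\<Sum>y\<in>P. c (fst a y) y) = (int s + 1) * (\<Sum>y\<in>P. int (cl y (fst a y))) - int (card P)"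
    by (simp add: c_def common_lines_commute sum_subtractf sum_distrib_left)
  also have "\<dots> = (int s + 1) * (int (\<Sum>y\<in>P. cl y (fst a y)) - (int s * int t + 1))"
    unfolding cP by (simp add: algebra_simps)
  finally show ?thesis unfolding D_def by (subst (asm) dvd_mult_cancel_left) simp
qed

lemma card_collinear_points:
  assumes x: "x \<in> P"
  shows "card {q\<in>P. col x q} = 1 + (t + 1) * s"
proof -
  define A where "A L = {p\<in>P. I p L} - {x}" for L
  have "card {l\<in>Ls. I x l} \<noteq> 0" using card_lines_through[OF x] by simp
  then have "{l\<in>Ls. I x l} \<noteq> {}" by (metis card.empty)
  then have XU: "{q\<in>P. col x q} = insert x (\<Union>L\<in>{l\<in>Ls. I x l}. A L)"
    using x unfolding A_def collinear_def by auto
  have "card (A L) = s" if "L \<in> {l\<in>Ls. I x l}" for L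
    using that card_points_on_line[of L] x finite_points by (simp add: A_def card_Diff_singleton)
  moreover have "\<forall>i\<in>{l\<in>Ls. I x l}. \<forall>j\<in>{l\<in>Ls. I x l}. i \<noteq> j \<longrightarrow> A i \<inter> A j = {}"
    using unique_line x by (auto simp: A_def)
  moreover have "finite (A L)" for L using finite_points by (simp add: A_def)
  ultimately have "card (\<Union>L\<in>{l\<in>Ls. I x l}. A L) = (t + 1) * s"
    using finite_lines card_lines_through[OF x] by (simp add: card_UN_disjoint)
  moreover have "finite (\<Union>L\<in>{l\<in>Ls. I x l}. A L)"
    using finite_lines finite_points by (auto simp: A_def)
  moreover have "x \<notin> (\<Union>L\<in>{l\<in>Ls. I x l}. A L)" by (auto simp: A_def)
  ultimately show ?thesis unfolding XU by simp
qed

lemma card_noncollinear_points_on_line: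
  assumes x: "x \<in> P" and M: "M \<in> Ls" "\<not> I x M"
  shows "card {y\<in>P. I y M \<and> \<not> col x y} = s"
proof -
  obtain q where q: "q \<in> P" "I q M" "col x q"
    and uq: "\<And>q'. q' \<in> P \<Longrightarrow> I q' M \<Longrightarrow> col x q' \<Longrightarrow> q' = q"
    using unique_collinear_point_on_line[OF x M] by blast
  have "{y\<in>P. I y M \<and> \<not> col x y} = {p\<in>P. I p M} - {q}"
  proof (intro equalityI subsetI)
    fix y assume "y \<in> {p\<in>P. I p M} - {q}"
    then show "y \<in> {y\<in>P. I y M \<and> \<not> col x y}" using uq[of y] by blast
  qed (use q(3) in blast)
  then show ?thesis using card_points_on_line[OF M(1)] q finite_points by (simp add: card_Diff_singleton)
qed

end

locale line_fixing_automorphism = finite_gq P Ls I s t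
  for P :: "'p set" and Ls :: "'l set" and I s t +
  fixes x :: 'p and a :: "('p \<Rightarrow> 'p) \<times> ('l \<Rightarrow> 'l)"
  assumes x: "x \<in> P" and automorphism: "automorphism P Ls I a"
    and fixes_lines_through_x: "\<And>l. l \<in> Ls \<Longrightarrow> I x l \<Longrightarrow> snd a l = l"
begin

lemma point_image: "y \<in> P \<Longrightarrow> fst a y \<in> P"
  using automorphism unfolding automorphism_def by (meson bij_betwE)

lemma line_image: "l \<in> Ls \<Longrightarrow> snd a l \<in> Ls"
  using automorphism unfolding automorphism_def by (meson bij_betwE)

lemma incident_image: "y \<in> P \<Longrightarrow> l \<in> Ls \<Longrightarrow> I (fst a y) (snd a l) \<longleftrightarrow> I y l"
  using automorphism unfolding automorphism_def by blast

lemma collinear_x_image: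
  assumes y: "y \<in> P"
  shows "col x (fst a y) \<longleftrightarrow> col x y"
proof
  assume "col x (fst a y)"
  then obtain L where L: "L \<in> Ls" "I x L" "I (fst a y) L" by (auto simp: collinear_def)
  then have "I y L" using incident_image[OF y L(1)] fixes_lines_through_x[OF L(1,2)] by simp
  then show "col x y" using L by (auto simp: collinear_def)
next
  assume "col x y"
  then obtain L where L: "L \<in> Ls" "I x L" "I y L" by (auto simp: collinear_def)
  then have "I (fst a y) L" using incident_image[OF y L(1)] fixes_lines_through_x[OF L(1,2)] by simp
  then show "col x (fst a y)" using L by (auto simp: collinear_def)
qed

text \<open>The point \<open>m\<close> of \<open>M\<close> collinear with \<open>x\<close> is fixed: both \<open>m\<close> and its image are the point
  of the line \<open>xm\<close> collinear with \<open>a y\<close>. So \<open>M\<close> and its image share the points \<open>m\<close> and \<open>a y\<close>.\<close>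
lemma fixed_line_through_far_point:
  assumes y: "y \<in> P" "\<not> col x y" and M: "M \<in> Ls" "I y M" "I (fst a y) M"
  shows "snd a M = M"
proof -
  have ay: "fst a y \<in> P" "\<not> col x (fst a y)" using y point_image collinear_x_image by auto
  have "\<not> I x M" using M y x by (auto simp: collinear_def)
  then obtain m where m: "m \<in> P" "I m M" "col x m"
    using unique_collinear_point_on_line[OF x M(1)] by blast
  then obtain L where L: "L \<in> Ls" "I x L" "I m L" by (auto simp: collinear_def)
  have am_L: "I (fst a m) L"
    using incident_image[OF m(1) L(1)] fixes_lines_through_x[OF L(1,2)] L(3) by simp
  have am_aM: "I (fst a m) (snd a M)" using incident_image[OF m(1) M(1)] m(2) by simp
  have ay_aM: "I (fst a y) (snd a M)" using incident_image[OF y(1) M(1)] M(2) by simp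
  have "fst a m = m"
  proof -
    have "\<not> I (fst a y) L" using ay(2) L by (auto simp: collinear_def)
    then obtain q where "\<forall>q'. q' \<in> P \<and> I q' L \<and> col (fst a y) q' \<longrightarrow> q' = q"
      using unique_collinear_point_on_line[OF ay(1) L(1)] by blast
    moreover have "col (fst a y) m" using M(1,3) m(2) by (auto simp: collinear_def)
    moreover have "col (fst a y) (fst a m)"
      using line_image[OF M(1)] am_aM ay_aM by (auto simp: collinear_def)
    ultimately show ?thesis using m(1) L(3) point_image[OF m(1)] am_L by blast
  qed
  moreover have "m \<noteq> fst a y" using m(3) ay(2) by auto
  ultimately show ?thesis
    using unique_line[OF m(1) ay(1) _ M(1) line_image[OF M(1)] m(2) M(3)] am_aM ay_aM by simp
qed

lemma collinear_image_of_far_point: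
  assumes y: "y \<in> P" "\<not> col x y"
  shows "col y (fst a y) \<longleftrightarrow> (\<exists>M\<in>Ls. \<not> I x M \<and> snd a M = M \<and> I y M)"
proof
  assume "col y (fst a y)"
  then obtain M where M: "M \<in> Ls" "I y M" "I (fst a y) M" by (auto simp: collinear_def)
  moreover have "\<not> I x M" using M y x by (auto simp: collinear_def)
  ultimately show "\<exists>M\<in>Ls. \<not> I x M \<and> snd a M = M \<and> I y M"
    using fixed_line_through_far_point[OF y M] by blast
next
  assume "\<exists>M\<in>Ls. \<not> I x M \<and> snd a M = M \<and> I y M"
  then obtain M where M: "M \<in> Ls" "snd a M = M" "I y M" by blast
  then have "I (fst a y) M" using incident_image[OF y(1) M(1)] by simp
  then show "col y (fst a y)" using M by (auto simp: collinear_def)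
qed

lemma sum_common_lines_image_collinear:
  "(\<Sum>y\<in>{q\<in>P. col x q}. cl y (fst a y))
     = t * card {q\<in>P. col x q \<and> fst a q = q} + card {q\<in>P. col x q}"
proof -
  have "cl y (fst a y) = 1 + (if fst a y = y then t else 0)" if y: "y \<in> P" "col x y" for y
  proof (cases "fst a y = y")
    case False
    obtain L where L: "L \<in> Ls" "I x L" "I y L" using y(2) by (auto simp: collinear_def)
    then have "I (fst a y) L" using incident_image[OF y(1) L(1)] fixes_lines_through_x[OF L(1,2)] by simp
    then have "col y (fst a y)" using L by (auto simp: collinear_def)
    then show ?thesis using common_lines_collinear[OF y(1) point_image[OF y(1)]] False by simp
  qed (use common_lines_self[OF y(1)] in simp)
  then have "(\<Sum>y\<in>{q\<in>P. col x q}. cl y (fst a y))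
      = (\<Sum>y\<in>{q\<in>P. col x q}. 1 + (if fst a y = y then t else 0))"
    by (intro sum.cong) auto
  also have "\<dots> = card {q\<in>P. col x q} + (\<Sum>y\<in>{q\<in>P. col x q}. if fst a y = y then t else 0)"
    by (subst sum.distrib) simp
  also have "(\<Sum>y\<in>{q\<in>P. col x q}. if fst a y = y then t else 0)
      = (\<Sum>y\<in>{y\<in>{q\<in>P. col x q}. fst a y = y}. t)"
    by (rule sum.inter_filter[symmetric]) (simp add: finite_points)
  also have "{y\<in>{q\<in>P. col x q}. fst a y = y} = {q\<in>P. col x q \<and> fst a q = q}" by auto
  finally show ?thesis by simp
qed

lemma fixed_lines_through_moved_point:
  assumes y: "y \<in> P" "fst a y \<noteq> y" and M1: "M1 \<in> Ls" "snd a M1 = M1" "I y M1"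
    and M2: "M2 \<in> Ls" "snd a M2 = M2" "I y M2"
  shows "M1 = M2"
proof -
  have "I (fst a y) M1" "I (fst a y) M2"
    using incident_image[OF y(1) M1(1)] incident_image[OF y(1) M2(1)] M1 M2 by auto
  then show ?thesis
    using unique_line[OF y(1) point_image[OF y(1)] y(2)[symmetric] M1(1) M2(1)] M1 M2 by auto
qed

lemma sum_common_lines_image_far:
  assumes fixed: "\<And>q. q \<in> P \<Longrightarrow> fst a q = q \<Longrightarrow> col x q"
  shows "(\<Sum>y\<in>{q\<in>P. \<not> col x q}. cl y (fst a y)) = s * card {l\<in>Ls. \<not> I x l \<and> snd a l = l}"
proof -
  define FL where "FL = {l\<in>Ls. \<not> I x l \<and> snd a l = l}"
  define N where "N M = {y\<in>P. I y M \<and> \<not> col x y}" for M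
  have moved: "fst a y \<noteq> y" if "y \<in> P" "\<not> col x y" for y using fixed that by blast
  have "cl y (fst a y) = (if y \<in> (\<Union>M\<in>FL. N M) then 1 else 0)" if y: "y \<in> P" "\<not> col x y" for y
    using collinear_image_of_far_point[OF y] common_lines_not_collinear
      common_lines_collinear[OF y(1) point_image[OF y(1)]] moved[OF y] y
    unfolding FL_def N_def by auto
  then have "(\<Sum>y\<in>{q\<in>P. \<not> col x q}. cl y (fst a y))
      = (\<Sum>y\<in>{q\<in>P. \<not> col x q}. if y \<in> (\<Union>M\<in>FL. N M) then 1 else 0)"
    by (intro sum.cong) auto
  also have "\<dots> = (\<Sum>y\<in>{y\<in>{q\<in>P. \<not> col x q}. y \<in> (\<Union>M\<in>FL. N M)}. 1)"
    by (rule sum.inter_filter[symmetric]) (simp add: finite_points)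
  also have "{y\<in>{q\<in>P. \<not> col x q}. y \<in> (\<Union>M\<in>FL. N M)} = (\<Union>M\<in>FL. N M)"
    by (auto simp: N_def)
  also have "(\<Sum>y\<in>(\<Union>M\<in>FL. N M). 1) = card (\<Union>M\<in>FL. N M)" by simp
  also have "\<dots> = (\<Sum>M\<in>FL. card (N M))"
  proof (rule card_UN_disjoint)
    show "\<forall>M1\<in>FL. \<forall>M2\<in>FL. M1 \<noteq> M2 \<longrightarrow> N M1 \<inter> N M2 = {}"
      using fixed_lines_through_moved_point moved unfolding FL_def N_def by blast
  qed (use finite_lines finite_points in \<open>auto simp: FL_def N_def\<close>)
  also have "\<dots> = (\<Sum>M\<in>FL. s)"
    using card_noncollinear_points_on_line[OF x] by (intro sum.cong) (auto simp: FL_def N_def)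
  finally show ?thesis by (simp add: FL_def)
qed

theorem sum_common_lines_image:
  assumes fixed: "\<And>q. q \<in> P \<Longrightarrow> fst a q = q \<Longrightarrow> col x q"
  shows "(\<Sum>y\<in>P. cl y (fst a y))
           = t * card {q\<in>P. fst a q = q} + (1 + (t + 1) * s) + s * card {l\<in>Ls. \<not> I x l \<and> snd a l = l}"
proof -
  have "P = {q\<in>P. col x q} \<union> {q\<in>P. \<not> col x q}" by auto
  then have "(\<Sum>y\<in>P. cl y (fst a y))
      = (\<Sum>y\<in>{q\<in>P. col x q}. cl y (fst a y)) + (\<Sum>y\<in>{q\<in>P. \<not> col x q}. cl y (fst a y))"
    using finite_points by (metis (no_types, lifting) sum.union_disjoint disjoint_iff
        finite_Un mem_Collect_eq)
  moreover have "{q\<in>P. col x q \<and> fst a q = q} = {q\<in>P. fst a q = q}" using fixed by auto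
  ultimately show ?thesis
    using sum_common_lines_image_collinear sum_common_lines_image_far[OF fixed] card_collinear_points[OF x]
    by simp
qed

end

section \<open>Prime powers\<close>

lemma pow_add_one_dvd_pow_diff_one:
  fixes P :: int and d v :: nat
  assumes P: "P \<ge> 2" and d: "d \<ge> 1"
  shows "(P ^ d + 1 dvd P ^ v - 1 \<longrightarrow> 2 * d dvd v) \<and>
         (P ^ d + 1 dvd P ^ v + 1 \<longrightarrow> 2 * d dvd v + d)"
proof (induction v rule: less_induct)
  case (less v)
  show ?case
  proof (cases "v < d")
    case True
    have "P ^ v < P ^ d" using P True by (simp add: power_strict_increasing)
    moreover have "P ^ v \<ge> 1" using P by simp
    moreover have "P ^ v = 1 \<Longrightarrow> v = 0" using P power_le_one_iff[of P v] by auto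
    ultimately show ?thesis
      using zdvd_not_zless[of "P ^ v - 1" "P ^ d + 1"] zdvd_not_zless[of "P ^ v + 1" "P ^ d + 1"]
      by (cases "P ^ v = 1") auto
  next
    case False
    define w where "w = v - d"
    have v: "v = w + d" and "w < v" using False d by (auto simp: w_def)
    have "P ^ v - 1 = - (P ^ w + 1) + P ^ w * (P ^ d + 1)"
      and "P ^ v + 1 = - (P ^ w - 1) + P ^ w * (P ^ d + 1)"
      unfolding v by (simp_all add: power_add algebra_simps)
    then have "P ^ d + 1 dvd P ^ v - 1 \<longleftrightarrow> P ^ d + 1 dvd P ^ w + 1"
      and "P ^ d + 1 dvd P ^ v + 1 \<longleftrightarrow> P ^ d + 1 dvd P ^ w - 1"
      by (simp_all only: dvd_add_times_triv_right_iff dvd_minus_iff)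
    moreover have "2 * d dvd v + d \<longleftrightarrow> 2 * d dvd w" using v by (simp add: mult_2 add.assoc)
    moreover have "2 * d dvd v \<longleftrightarrow> 2 * d dvd w + d" using v by simp
    ultimately show ?thesis using less.IH[OF \<open>w < v\<close>] by blast
  qed
qed

lemma pow_add_one_dvd_mult_pow_cancel:
  fixes P Y :: int
  assumes d: "d \<ge> 1" and "P ^ d + 1 dvd P ^ w * Y"
  shows "P ^ d + 1 dvd Y"
  using assms(2)
proof (induction w)
  case (Suc w)
  then have "P ^ d + 1 dvd P ^ (d - 1) * (P * (P ^ w * Y))" by (simp add: mult.assoc)
  also have "P ^ (d - 1) * (P * (P ^ w * Y)) = - (P ^ w * Y) + (P ^ w * Y) * (P ^ d + 1)"
    using d by (simp add: algebra_simps power_Suc[symmetric])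
  finally have "P ^ d + 1 dvd P ^ w * Y"
    by (simp only: dvd_add_times_triv_right_iff dvd_minus_iff)
  then show ?case by (rule Suc.IH)
qed simp

lemma pow_add_one_dvd_pow_diff:
  fixes P :: int and d u w :: nat
  assumes P: "P \<ge> 2" and d: "d \<ge> 1" and dvd: "P ^ d + 1 dvd P ^ u - P ^ w"
  shows "2 * int d dvd int u - int w"
  using dvd
proof (induction w u rule: linorder_wlog)
  case (le w u)
  have "P ^ u - P ^ w = P ^ w * (P ^ (u - w) - 1)"
    using le(1) by (simp add: algebra_simps flip: power_add)
  then have "P ^ d + 1 dvd P ^ (u - w) - 1"
    using le(2) pow_add_one_dvd_mult_pow_cancel[OF d] by metis
  then have "2 * d dvd u - w" using pow_add_one_dvd_pow_diff_one[OF P d] by blast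
  then show ?case using le(1) by (metis int_dvd_int_iff of_nat_diff of_nat_mult of_nat_numeral)
next
  case (sym w u)
  then show ?case by (metis dvd_minus_iff minus_diff_eq)
qed

lemma prime_power_factor_pair:
  fixes p s t k :: nat
  assumes p: "prime p" and st: "s * t = p ^ k" and "t < s"
  obtains j d where "t = p ^ j" "s = p ^ j * p ^ d" "d \<ge> 1"
proof -
  obtain i where i: "s = p ^ i" using divides_primepow_nat[OF p, of s k] st by (metis dvd_triv_left)
  obtain j where j: "t = p ^ j" using divides_primepow_nat[OF p, of t k] st by (metis dvd_triv_right)
  have "j < i" using \<open>t < s\<close> prime_ge_2_nat[OF p] unfolding i j by (simp add: power_less_imp_less_exp)
  then have "s = p ^ j * p ^ (i - j)" unfolding i by (simp flip: power_add)
  with j \<open>j < i\<close> show ?thesis by (intro that) auto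
qed

lemma prime_power_ratio_even_exponent:
  fixes p s t k u f :: nat
  assumes p: "prime p" and st: "s * t = p ^ k" "t < s"
    and dvd: "int s + int t dvd int t * int (p ^ u) + int s * int f"
  shows "f \<noteq> 0 \<and> ((\<exists>m. f = p ^ m) \<longrightarrow>
           (\<exists>e::int. even e \<and> real (p ^ u) / real f = (real s / real t) powi e))"
proof -
  obtain j d where t: "t = p ^ j" and s: "s = p ^ j * p ^ d" and d: "d \<ge> 1"
    using prime_power_factor_pair[OF p st] .
  define P where "P = int p"
  have P: "P \<ge> 2" using prime_ge_2_nat[OF p] by (simp add: P_def)
  have "P ^ j * (P ^ d + 1) dvd P ^ j * (P ^ u + P ^ d * int f)"
    using dvd unfolding s t P_def by (simp add: algebra_simps)
  then have "P ^ d + 1 dvd P ^ u + P ^ d * int f"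
    using P by (subst (asm) dvd_mult_cancel_left) auto
  also have "P ^ u + P ^ d * int f = (P ^ u - int f) + int f * (P ^ d + 1)"
    by (simp add: algebra_simps)
  finally have key: "P ^ d + 1 dvd P ^ u - int f"
    by (simp only: dvd_add_times_triv_right_iff)
  have "f \<noteq> 0"
  proof
    assume "f = 0"
    then have "P ^ d + 1 dvd P ^ u * 1" using key by simp
    then have "P ^ d + 1 dvd 1" by (rule pow_add_one_dvd_mult_pow_cancel[OF d])
    moreover have "P ^ d > 0" using P by simp
    ultimately show False using P by simp
  qed
  moreover have "\<exists>e::int. even e \<and> real (p ^ u) / real f = (real s / real t) powi e"
    if f: "f = p ^ w" for w
  proof -
    have "2 * int d dvd int u - int w"
      using pow_add_one_dvd_pow_diff[OF P d] key unfolding f P_def by simp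
    then obtain e where e: "int u - int w = int d * e" and "even e"
      by (metis dvd_def mult.assoc mult.commute dvd_triv_left)
    have "real s / real t = real p ^ d" using prime_gt_0_nat[OF p] unfolding s t by simp
    then have "(real s / real t) powi e = real p powi (int u - int w)"
      unfolding e by (simp add: power_int_mult)
    also have "\<dots> = real (p ^ u) / real f"
      using prime_gt_0_nat[OF p] unfolding f by (simp add: power_int_diff)
    finally show ?thesis using \<open>even e\<close> by metis
  qed
  ultimately show ?thesis by blast
qed

theorem mainTheorem10:
  fixes P :: "'p set" and Ls :: "'l set" and I :: "'p \<Rightarrow> 'l \<Rightarrow> bool"
    and s t p :: nat and x :: 'p and G :: "(('p \<Rightarrow> 'p) \<times> ('l \<Rightarrow> 'l)) set"
    and a :: "('p \<Rightarrow> 'p) \<times> ('l \<Rightarrow> 'l)" and La :: 'l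
  assumes EGQ: "elation_GQ P Ls I s t x G"
    and st: "s > t"
    and pr: "prime p"
    and stpow: "\<exists>k. s * t = p ^ k"
    and aG: "a \<in> G" and anid: "a \<noteq> aut_id"
    and La: "La \<in> Ls" "I x La"
    and fixLa: "\<forall>q\<in>P. fst a q = q \<longrightarrow> I q La"
    and alphapow: "\<exists>k. card {q\<in>P. I q La \<and> fst a q = q} - 1 = p ^ k"
  shows "card {l\<in>Ls. \<not> I x l \<and> snd a l = l} \<noteq> 0 \<and>
         ((\<exists>m. card {l\<in>Ls. \<not> I x l \<and> snd a l = l} = p ^ m) \<longrightarrow>
           (\<exists>e::int. even e \<and>
              real (card {q\<in>P. I q La \<and> fst a q = q} - 1)
                / real (card {l\<in>Ls. \<not> I x l \<and> snd a l = l})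
              = (real s / real t) powi e))"
proof -
  have x: "x \<in> P" and subgroup: "aut_subgroup P Ls I G"
    and gq: "finite_GQ P Ls I s t" and fixes_x: "\<forall>a\<in>G. \<forall>l\<in>Ls. I x l \<longrightarrow> snd a l = l"
    using EGQ unfolding elation_GQ_def by blast+
  interpret line_fixing_automorphism P Ls I s t x a
    using gq x subgroup aG fixes_x by unfold_locales (auto simp: aut_subgroup_def)
  define F where "F = card {q\<in>P. I q La \<and> fst a q = q}"
  define f where "f = card {l\<in>Ls. \<not> I x l \<and> snd a l = l}"
  define T where "T = (\<Sum>y\<in>P. common_lines Ls I y (fst a y))"
  obtain k u where k: "s * t = p ^ k" and u: "F - 1 = p ^ u"
    using stpow alphapow unfolding F_def by blast
  have "{q\<in>P. fst a q = q} = {q\<in>P. I q La \<and> fst a q = q}" using fixLa by auto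
  moreover have "\<And>q. q \<in> P \<Longrightarrow> fst a q = q \<Longrightarrow> collinear P Ls I x q"
    using fixLa La x unfolding collinear_def by blast
  ultimately have "T = t * F + (1 + (t + 1) * s) + s * f"
    using sum_common_lines_image unfolding T_def F_def f_def by presburger
  moreover have "F \<ge> 1" using u prime_gt_0_nat[OF pr] by (cases F) auto
  ultimately have "int T - (int s * int t + 1) = (int t * int (p ^ u) + int s * int f) + (int s + int t)"
    by (simp flip: u add: of_nat_diff algebra_simps)
  moreover have "int s + int t dvd int T - (int s * int t + 1)"
    using benson_congruence[OF automorphism x] st unfolding T_def by simp
  ultimately have "int s + int t dvd int t * int (p ^ u) + int s * int f"
    by (simp add: dvd_add_left_iff[symmetric])
  then show ?thesis
    using prime_power_ratio_even_exponent[OF pr k st] unfolding F_def[symmetric] f_def[symmetric] u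
    by blast
qed

end
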